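(* Let $X$ and $Y$ be uncertain variables on a common set $\Omega$ with finite ranges. Then $$\mathcal{L}_\star(X\rightarrow Y)=\log_2\Big(|[\![X]\!]| - \min_{y\in[\![Y]\!]} |[\![X\mid Y(\omega)=y]\!]| + 1\Big).$$
   Context: Let $\Omega$ be a set. An uncertain variable (uv) is a map $X:\Omega\to\mathbb{X}$ into some set; all uvs considered have finite ranges. The range of $X$ is $[\![X]\!]:=\{X(\omega):\omega\in\Omega\}$; the conditional range is $[\![X\mid Y(\omega)=y]\!]:=\{X(\omega):\omega\in\Omega,\ Y(\omega)=y\}$. The non-stochastic brute-force guessing leakage from a uv $U$ to a uv $Y$ is $$\mathcal{L}(U\rightarrow Y):=\log_2\left(\frac{|[\![U]\!]|}{\min_{y\in[\![Y]\!]}|[\![U\mid Y(\omega)=y]\!]|}\right).$$ The maximal non-stochastic brute-force leakage from $X$ to $Y$ is $$\mathcal{L}_\star(X\rightarrow Y):=\sup_{g}\ \mathcal{L}(g\circ X\rightarrow Y),$$ where the supremum ranges over all finite sets $\mathcal{U}$ and all functions $g:[\![X]\!]\to\mathcal{U}$. *)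

theory Defs
  imports Complex_Main
begin

text \<open>Uncertain variables are maps from the sample type 'o (playing the role of Omega).
  The range of X is range X; the conditional range of U given Y = y is below.\<close>

definition cond_range :: "('o \<Rightarrow> 'u) \<Rightarrow> ('o \<Rightarrow> 'y) \<Rightarrow> 'y \<Rightarrow> 'u set" where
  "cond_range U Y y = {U w | w. Y w = y}"

definition bf_leakage :: "('o \<Rightarrow> 'u) \<Rightarrow> ('o \<Rightarrow> 'y) \<Rightarrow> real" where
  "bf_leakage U Y =
     log 2 (real (card (range U)) / real (Min ((\<lambda>y. card (cond_range U Y y)) ` range Y)))"

text \<open>Maximal leakage: supremum over all functions g on the range of X into a finite set.
  Every finite set embeds into nat, and the leakage only depends on g restricted to range X,
  so we range over g :: 'x \<Rightarrow> nat.\<close>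

definition max_bf_leakage :: "('o \<Rightarrow> 'x) \<Rightarrow> ('o \<Rightarrow> 'y) \<Rightarrow> real" where
  "max_bf_leakage X Y = Sup {bf_leakage (g \<circ> X) Y | g :: 'x \<Rightarrow> nat. True}"

end

theory Submission
  imports Defs
begin

text \<open>A map g on the range of X loses at most the points outside the smallest conditional
  range A: the image of range X has at most |g A| + (|X| - |A|) points, and the ratio
  |g(range X)| / |g A| is then largest when g collapses A to one point and is injective
  elsewhere. That map attains the bound, so the supremum is a maximum.\<close>

abbreviation min_cond_card :: "('o \<Rightarrow> 'u) \<Rightarrow> ('o \<Rightarrow> 'y) \<Rightarrow> nat" where
  "min_cond_card U Y \<equiv> Min ((\<lambda>y. card (cond_range U Y y)) ` range Y)"

lemma card_image_le_card_image_subset_plus_diff: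
  assumes "finite S" and "A \<subseteq> S"
  shows "card (g ` S) \<le> card (g ` A) + card (S - A)"
proof -
  have "g ` S = g ` A \<union> g ` (S - A)" using assms(2) by auto
  then have "card (g ` S) \<le> card (g ` A) + card (g ` (S - A))"
    by (metis card_Un_le)
  also have "card (g ` (S - A)) \<le> card (S - A)"
    using assms(1) by (intro card_image_le) auto
  finally show ?thesis by simp
qed

lemma exists_collapse_to_point:
  assumes "finite S" and "A \<subseteq> S" and "A \<noteq> {}"
  obtains g :: "'a \<Rightarrow> nat" where "g ` A = {0}" and "card (g ` S) = card (S - A) + 1"
proof -
  obtain f :: "'a \<Rightarrow> nat" where f: "inj_on f S"
    using finite_imp_inj_to_nat_seg[OF assms(1)] by blast
  define g where "g x = (if x \<in> A then 0 else Suc (f x))" for x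
  have "g ` S = insert 0 ((Suc \<circ> f) ` (S - A))"
    using assms(2,3) by (auto simp: g_def)
  moreover have "card ((Suc \<circ> f) ` (S - A)) = card (S - A)"
    using f by (intro card_image) (auto simp: inj_on_def)
  ultimately have "card (g ` S) = card (S - A) + 1"
    using assms(1) by (simp only:) (subst card_insert_disjoint; auto)
  moreover have "g ` A = {0}" using assms(3) by (auto simp: g_def)
  ultimately show thesis using that by blast
qed

lemma ratio_le_excess_plus_one:
  fixes k d e :: nat
  assumes "k \<le> d + e" and "1 \<le> d"
  shows "real k / real d \<le> real e + 1"
proof -
  have "real e * 1 \<le> real e * real d" using assms(2) by (intro mult_left_mono) auto
  then have "real k \<le> real d + real e * real d" using assms(1) by linarith
  then show ?thesis using assms(2) by (simp add: divide_le_eq algebra_simps)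
qed

lemma cond_range_subset_range: "cond_range U Y y \<subseteq> range U"
  unfolding cond_range_def by auto

lemma cond_range_nonempty: "y \<in> range Y \<Longrightarrow> cond_range U Y y \<noteq> {}"
  unfolding cond_range_def by auto

lemma cond_range_comp: "cond_range (g \<circ> U) Y y = g ` cond_range U Y y"
  unfolding cond_range_def by auto

lemma finite_cond_range: "finite (range U) \<Longrightarrow> finite (cond_range U Y y)"
  using cond_range_subset_range finite_subset by metis

lemma min_cond_card_attained:
  assumes "finite (range Y)"
  obtains y where "y \<in> range Y" and "min_cond_card U Y = card (cond_range U Y y)"
proof -
  have "min_cond_card U Y \<in> (\<lambda>y. card (cond_range U Y y)) ` range Y"
    using assms by (intro Min_in) auto
  then show thesis using that by blast
qed

lemma min_cond_card_le:
  "finite (range Y) \<Longrightarrow> y \<in> range Y \<Longrightarrow> min_cond_card U Y \<le> card (cond_range U Y y)"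
  by (intro Min_le) auto

lemma min_cond_card_pos:
  assumes "finite (range U)" and "finite (range Y)"
  shows "1 \<le> min_cond_card U Y"
proof -
  obtain y where "y \<in> range Y" and "min_cond_card U Y = card (cond_range U Y y)"
    using min_cond_card_attained[OF assms(2)] .
  then show ?thesis
    using cond_range_nonempty finite_cond_range[OF assms(1)]
    by (metis One_nat_def Suc_leI card_gt_0_iff)
qed

lemma min_cond_card_le_card_range:
  assumes "finite (range U)" and "finite (range Y)"
  shows "min_cond_card U Y \<le> card (range U)"
proof -
  obtain y where "y \<in> range Y" and "min_cond_card U Y = card (cond_range U Y y)"
    using min_cond_card_attained[OF assms(2)] .
  then show ?thesis using card_mono[OF assms(1) cond_range_subset_range] by simp
qed

lemma bf_leakage_comp:
  "bf_leakage (g \<circ> X) Y =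
     log 2 (real (card (g ` range X)) / real (Min ((\<lambda>y. card (g ` cond_range X Y y)) ` range Y)))"
  unfolding bf_leakage_def cond_range_comp by (simp add: image_comp)

lemma bf_leakage_comp_le:
  fixes X :: "'o \<Rightarrow> 'x" and g :: "'x \<Rightarrow> 'u"
  assumes fX: "finite (range X)" and fY: "finite (range Y)"
  shows "bf_leakage (g \<circ> X) Y \<le>
    log 2 (real (card (range X)) - real (min_cond_card X Y) + 1)"
proof -
  define d where "d = min_cond_card (g \<circ> X) Y"
  obtain y where y: "y \<in> range Y" and d: "d = card (cond_range (g \<circ> X) Y y)"
    using min_cond_card_attained[OF fY] unfolding d_def by blast
  have fgX: "finite (range (g \<circ> X))" using fX by (metis finite_imageI image_comp)
  have "card (g ` range X) \<le> card (g ` cond_range X Y y) + card (range X - cond_range X Y y)"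
    using fX cond_range_subset_range by (rule card_image_le_card_image_subset_plus_diff)
  also have "card (range X - cond_range X Y y) = card (range X) - card (cond_range X Y y)"
    by (rule card_Diff_subset[OF finite_cond_range[OF fX] cond_range_subset_range])
  also have "\<dots> \<le> card (range X) - min_cond_card X Y"
    using min_cond_card_le[OF fY y] by (rule diff_le_mono2)
  finally have "card (g ` range X) \<le> d + (card (range X) - min_cond_card X Y)"
    by (simp add: d cond_range_comp)
  then have "real (card (g ` range X)) / real d \<le> real (card (range X) - min_cond_card X Y) + 1"
    using min_cond_card_pos[OF fgX fY] unfolding d_def by (rule ratio_le_excess_plus_one)
  moreover have "min_cond_card X Y \<le> card (range X)"
    using fX fY by (rule min_cond_card_le_card_range)
  moreover have "0 < real (card (g ` range X)) / real d"
    using fX min_cond_card_pos[OF fgX fY] by (simp add: d_def card_gt_0_iff)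
  ultimately show ?thesis
    by (simp add: bf_leakage_comp d_def cond_range_comp image_comp of_nat_diff)
qed

lemma bf_leakage_attains_bound:
  fixes X :: "'o \<Rightarrow> 'x"
  assumes fX: "finite (range X)" and fY: "finite (range Y)"
  obtains g :: "'x \<Rightarrow> nat" where "bf_leakage (g \<circ> X) Y =
    log 2 (real (card (range X)) - real (min_cond_card X Y) + 1)"
proof -
  obtain y where y: "y \<in> range Y" and m: "min_cond_card X Y = card (cond_range X Y y)"
    using min_cond_card_attained[OF fY] .
  obtain g :: "'x \<Rightarrow> nat" where g0: "g ` cond_range X Y y = {0}"
    and card_g: "card (g ` range X) = card (range X - cond_range X Y y) + 1"
    using exists_collapse_to_point[OF fX cond_range_subset_range cond_range_nonempty[OF y]] .
  have fgX: "finite (range (g \<circ> X))" using fX by (metis finite_imageI image_comp)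
  have "min_cond_card (g \<circ> X) Y \<le> 1"
    using min_cond_card_le[OF fY y, of "g \<circ> X"] by (simp add: cond_range_comp g0)
  then have "Min ((\<lambda>y. card (g ` cond_range X Y y)) ` range Y) = 1"
    using min_cond_card_pos[OF fgX fY] by (simp add: cond_range_comp)
  moreover have "card (range X - cond_range X Y y) = card (range X) - min_cond_card X Y"
    unfolding m by (rule card_Diff_subset[OF finite_cond_range[OF fX] cond_range_subset_range])
  moreover have "min_cond_card X Y \<le> card (range X)"
    using fX fY by (rule min_cond_card_le_card_range)
  ultimately have "bf_leakage (g \<circ> X) Y =
      log 2 (real (card (range X)) - real (min_cond_card X Y) + 1)"
    by (simp add: bf_leakage_comp card_g of_nat_diff add.commute)
  then show thesis by (rule that)
qed

theorem proposition4:
  fixes X :: "'o \<Rightarrow> 'x" and Y :: "'o \<Rightarrow> 'y"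
  assumes "finite (range X)" and "finite (range Y)"
  shows "max_bf_leakage X Y =
    log 2 (real (card (range X))
           - real (Min ((\<lambda>y. card (cond_range X Y y)) ` range Y)) + 1)"
proof -
  obtain g :: "'x \<Rightarrow> nat" where g: "bf_leakage (g \<circ> X) Y =
      log 2 (real (card (range X)) - real (min_cond_card X Y) + 1)"
    using bf_leakage_attains_bound[OF assms] .
  show ?thesis
    unfolding max_bf_leakage_def
  proof (rule cSup_eq_maximum)
    show "log 2 (real (card (range X)) - real (min_cond_card X Y) + 1)
        \<in> {bf_leakage (h \<circ> X) Y |h :: 'x \<Rightarrow> nat. True}"
      using g[symmetric] by blast
  qed (use bf_leakage_comp_le[OF assms] in blast)
qed

end
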